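(* Under the triangle scaling property with constant $G\ge1$, the iterates of acc-BPP3 satisfy, for every $T\ge1$ and every $\lambda\in\Lambda$, $$d(\lambda)-d(\lambda_T)\le\frac{4G\,D_h(\lambda,\lambda_0)}{\big(\sum_{k=0}^{T-1}\sqrt{\eta_k}\big)^2}.$$
   Context: $\Lambda\subseteq\mathbb{R}^m$ closed convex, $d:\Lambda\to\mathbb{R}$ concave. $h$ strictly convex, continuously differentiable on $\Lambda$, $D_h(\lambda,\tilde\lambda)=h(\lambda)-h(\tilde\lambda)-\nabla h(\tilde\lambda)^\top(\lambda-\tilde\lambda)$. Triangle scaling property with constant $G$: $D_h((1-\theta)\lambda+\theta\lambda_1,(1-\theta)\lambda+\theta\lambda_2)\le G\theta^2D_h(\lambda_1,\lambda_2)$ for all $\lambda,\lambda_1,\lambda_2\in\Lambda$, $\theta\in[0,1]$. Algorithm acc-BPP3: given $\lambda_0\in\Lambda$, $v_0=\lambda_0$, $\theta_0=1$, $\eta_k>0$; for $k\ge0$: $y_k=\theta_kv_k+(1-\theta_k)\lambda_k$; $\lambda_{k+1}\in\arg\max_{\lambda\in\Lambda}\{d(\lambda)-\frac1{\eta_k}D_h(\lambda,y_k)\}$; $v_{k+1}\in\arg\max_{\lambda\in\Lambda}\big\{-GD_h(\lambda,\lambda_0)+\sum_{j=0}^k\frac{\eta_j}{\theta_j}\big(d(\lambda_{j+1})+\frac1{\eta_j}(\nabla h(\lambda_{j+1})-\nabla h(y_j))^\top(\lambda-\lambda_{j+1})\big)\big\}$; $\theta_{k+1}\in(0,1]$ is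 defined by $\frac{\eta_k}{\theta_k^2}=\frac{\eta_{k+1}}{\theta_{k+1}^2}-\frac{\eta_{k+1}}{\theta_{k+1}}$. All maximizers are assumed to exist. *)

theory Defs
  imports "HOL-Analysis.Analysis"
begin

definition strictly_convex_on :: "'a::real_vector set \<Rightarrow> ('a \<Rightarrow> real) \<Rightarrow> bool" where
  "strictly_convex_on S f \<longleftrightarrow> convex S \<and>
    (\<forall>x\<in>S. \<forall>y\<in>S. x \<noteq> y \<longrightarrow> (\<forall>t. 0 < t \<and> t < 1 \<longrightarrow>
        f ((1 - t) *\<^sub>R x + t *\<^sub>R y) < (1 - t) * f x + t * f y))"

definition bregman :: "('a::euclidean_space \<Rightarrow> real) \<Rightarrow> ('a \<Rightarrow> 'a) \<Rightarrow> 'a \<Rightarrow> 'a \<Rightarrow> real" where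
  "bregman h gh x y = h x - h y - gh y \<bullet> (x - y)"

definition triangle_scaling :: "('a::euclidean_space \<Rightarrow> real) \<Rightarrow> ('a \<Rightarrow> 'a) \<Rightarrow> 'a set \<Rightarrow> real \<Rightarrow> bool" where
  "triangle_scaling h gh L G \<longleftrightarrow>
    (\<forall>l\<in>L. \<forall>l1\<in>L. \<forall>l2\<in>L. \<forall>\<theta>::real. 0 \<le> \<theta> \<and> \<theta> \<le> 1 \<longrightarrow>
       bregman h gh ((1 - \<theta>) *\<^sub>R l + \<theta> *\<^sub>R l1) ((1 - \<theta>) *\<^sub>R l + \<theta> *\<^sub>R l2)
         \<le> G * \<theta>\<^sup>2 * bregman h gh l1 l2)"

end

(* By the three-point property of Bregman divergences (a maximiser x of
   phi - G D(., x0) over L, with phi concave, satisfies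
   phi z - G D(z, x0) <= phi x - G D(x, x0) - G D(z, x)), the proximal step puts d
   below the affine model
     model_k z = d lam_{k+1} + <gh lam_{k+1} - gh y_k, z - lam_{k+1}> / eta_k,
   and v_{k+1} maximises the estimate function
     estimate_{k+1} = sum_{j<=k} (eta_j / theta_j) model_j - G D(., lam_0).
   With S_k = eta_k / theta_k^2 = sum_{j<=k} eta_j / theta_j, induction gives
   estimate_{k+1}(v_{k+1}) <= S_k d lam_{k+1}: the step evaluates model_k at
   (1 - theta_k) lam_k + theta_k v_{k+1}, where the triangle scaling property costs
   G theta_k^2 D(v_{k+1}, v_k), and S_k theta_k^2 = eta_k makes this exactly the
   three-point gain at v_k.  Since estimate_{k+1}(mu) >= S_k d mu - G D(mu, lam_0),
   this bounds S_{T-1} (d mu - d lam_T) by G D(mu, lam_0), and the recursion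
   S_{k+1} = S_k + sqrt(eta_{k+1} S_{k+1}) gives sum_{k<T} sqrt eta_k <= 2 sqrt S_{T-1}. *)

theory Submission
  imports Defs
begin

lemma has_derivative_le_of_increment_le:
  fixes f :: "'a::real_normed_vector \<Rightarrow> real"
  assumes f': "(f has_derivative f') (at x)"
    and incr: "\<And>t. 0 < t \<Longrightarrow> t < 1 \<Longrightarrow> f (x + t *\<^sub>R w) - f x \<le> t * c"
  shows "f' w \<le> c"
proof -
  have line: "((\<lambda>t::real. x + t *\<^sub>R w) has_derivative (\<lambda>t. t *\<^sub>R w)) (at 0)"
    by (auto intro!: derivative_eq_intros)
  have "((\<lambda>t. f (x + t *\<^sub>R w)) has_derivative (\<lambda>t. f' (t *\<^sub>R w))) (at 0)"
    using has_derivative_compose[OF line] f' by (simp add: o_def)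
  moreover have "f' (t *\<^sub>R w) = f' w * t" for t
    using linear_cmul[OF has_derivative_linear[OF f']] by simp
  ultimately have "((\<lambda>t. f (x + t *\<^sub>R w)) has_field_derivative f' w) (at 0)"
    by (simp add: has_field_derivative_def)
  then have "((\<lambda>t. (f (x + t *\<^sub>R w) - f x) / t) \<longlongrightarrow> f' w) (at_right 0)"
    by (auto simp: has_field_derivative_iff intro: filterlim_mono at_le)
  moreover have "\<forall>\<^sub>F t in at_right 0. (f (x + t *\<^sub>R w) - f x) / t \<le> c"
    using eventually_at_right_real[OF zero_less_one]
    by eventually_elim (use incr in \<open>auto simp: divide_le_eq mult.commute\<close>)
  ultimately show ?thesis
    by (rule tendsto_upperbound) simp
qed

lemma strictly_convex_on_imp_convex_on:
  assumes "strictly_convex_on S f"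
  shows "convex_on S f"
proof
  show "convex S"
    using assms by (simp add: strictly_convex_on_def)
  fix t :: real and x y assume "0 < t" "t < 1" "x \<in> S" "y \<in> S"
  with assms show "f ((1 - t) *\<^sub>R x + t *\<^sub>R y) \<le> (1 - t) * f x + t * f y"
    by (cases "x = y") (auto simp: strictly_convex_on_def algebra_simps intro: less_imp_le)
qed

lemma bregman_self [simp]: "bregman h gh x x = 0"
  by (simp add: bregman_def)

lemma bregman_three_point:
  "bregman h gh z y = bregman h gh z x + bregman h gh x y + (gh x - gh y) \<bullet> (z - x)"
  by (simp add: bregman_def algebra_simps inner_diff_left inner_diff_right)

lemma has_derivative_bregman:
  assumes "(h has_derivative (\<lambda>u. gh x \<bullet> u)) (at x)"
  shows "((\<lambda>z. bregman h gh z y) has_derivative (\<lambda>u. (gh x - gh y) \<bullet> u)) (at x)"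
  unfolding bregman_def using assms
  by (auto intro!: derivative_eq_intros simp: inner_diff_left)

lemma bregman_nonneg:
  assumes h: "convex_on S h" and "x \<in> S" "z \<in> S"
    and h': "(h has_derivative (\<lambda>u. gh x \<bullet> u)) (at x)"
  shows "0 \<le> bregman h gh z x"
proof -
  have "gh x \<bullet> (z - x) \<le> h z - h x"
  proof (rule has_derivative_le_of_increment_le[OF h'])
    fix t :: real assume "0 < t" "t < 1"
    moreover have "x + t *\<^sub>R (z - x) = (1 - t) *\<^sub>R x + t *\<^sub>R z"
      by (simp add: algebra_simps)
    ultimately show "h (x + t *\<^sub>R (z - x)) - h x \<le> t * (h z - h x)"
      using convex_onD[OF h, of t x z] \<open>x \<in> S\<close> \<open>z \<in> S\<close> by (simp add: algebra_simps)
  qed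
  then show ?thesis
    by (simp add: bregman_def)
qed

lemma inner_gradient_diff_le_bregman:
  assumes h: "convex_on S h" and S: "x \<in> S" "y \<in> S" "z \<in> S"
    and h': "\<And>u. u \<in> S \<Longrightarrow> (h has_derivative (\<lambda>v. gh u \<bullet> v)) (at u)"
  shows "(gh x - gh y) \<bullet> (z - x) \<le> bregman h gh z y"
proof -
  have "0 \<le> bregman h gh z x" "0 \<le> bregman h gh x y"
    using bregman_nonneg[where gh=gh, OF h S(1,3) h'] bregman_nonneg[where gh=gh, OF h S(2,1) h'] S
    by auto
  then show ?thesis
    using bregman_three_point[of h gh z y x] by simp
qed

lemma bregman_three_point_property:
  assumes "convex S" and \<phi>: "concave_on S \<phi>" and "x \<in> S" "z \<in> S"
    and h': "(h has_derivative (\<lambda>u. gh x \<bullet> u)) (at x)"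
    and max: "\<And>u. u \<in> S \<Longrightarrow> \<phi> u - G * bregman h gh u x0 \<le> \<phi> x - G * bregman h gh x x0"
  shows "\<phi> z - G * bregman h gh z x0 \<le> \<phi> x - G * bregman h gh x x0 - G * bregman h gh z x"
proof -
  have reg': "((\<lambda>u. - (G * bregman h gh u x0)) has_derivative (\<lambda>u. - (G * ((gh x - gh x0) \<bullet> u)))) (at x)"
    by (intro derivative_intros has_derivative_bregman[where gh=gh, OF h'])
  have "- (G * ((gh x - gh x0) \<bullet> (z - x))) \<le> \<phi> x - \<phi> z"
  proof (rule has_derivative_le_of_increment_le[OF reg'])
    fix t :: real assume t: "0 < t" "t < 1"
    define u where "u = x + t *\<^sub>R (z - x)"
    have u_eq: "u = (1 - t) *\<^sub>R x + t *\<^sub>R z"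
      by (simp add: u_def algebra_simps)
    have "(1 - t) * \<phi> x + t * \<phi> z \<le> \<phi> u"
      using concave_onD[OF \<phi>, of t x z] t \<open>x \<in> S\<close> \<open>z \<in> S\<close> u_eq by simp
    moreover have "u \<in> S"
      using convexD_alt[OF \<open>convex S\<close> \<open>x \<in> S\<close> \<open>z \<in> S\<close>, of t] t u_eq by simp
    ultimately show "- (G * bregman h gh u x0) - - (G * bregman h gh x x0) \<le> t * (\<phi> x - \<phi> z)"
      using max[of u] by (simp add: algebra_simps)
  qed
  moreover have "G * bregman h gh z x0
      = G * bregman h gh z x + G * bregman h gh x x0 + G * ((gh x - gh x0) \<bullet> (z - x))"
    by (subst bregman_three_point[of h gh z x0 x]) (simp add: distrib_left)
  ultimately show ?thesis
    by linarith
qed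

lemma concave_on_affine:
  fixes b :: "'a::real_inner"
  assumes "convex S"
  shows "concave_on S (\<lambda>z. c + b \<bullet> (z - p))"
  unfolding concave_on_iff
proof (intro conjI assms ballI allI impI)
  fix x y and u v :: real
  assume "u + v = 1"
  moreover have "u * (c + b \<bullet> (x - p)) + v * (c + b \<bullet> (y - p))
      = (u + v) * c + b \<bullet> (u *\<^sub>R x + v *\<^sub>R y - (u + v) *\<^sub>R p)"
    by (simp add: inner_add_right inner_diff_right algebra_simps)
  ultimately show "u * (c + b \<bullet> (x - p)) + v * (c + b \<bullet> (y - p)) \<le> c + b \<bullet> (u *\<^sub>R x + v *\<^sub>R y - p)"
    by simp
qed

lemma concave_on_sum_fun:
  assumes "finite I" "convex S" "\<And>i. i \<in> I \<Longrightarrow> concave_on S (f i)"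
  shows "concave_on S (\<lambda>x. \<Sum>i\<in>I. f i x)"
  using assms by (induction I rule: finite_induct) (auto simp: concave_on_const intro!: concave_on_add)

lemma sum_sqrt_le_twice_sqrt:
  fixes e S :: "nat \<Rightarrow> real"
  assumes S0: "S 0 = e 0" and S_pos: "\<And>k. 0 < S k" and e_nonneg: "\<And>k. 0 \<le> e k"
    and S_Suc: "\<And>k. S (Suc k) = S k + sqrt (e (Suc k) * S (Suc k))"
  shows "(\<Sum>j\<le>k. sqrt (e j)) \<le> 2 * sqrt (S k)"
proof (induction k)
  case 0
  show ?case
    using S0 e_nonneg[of 0] by simp
next
  case (Suc k)
  define s r q where "s = sqrt (S (Suc k))" and "r = sqrt (S k)" and "q = sqrt (e (Suc k))"
  have pos: "0 < s" "0 \<le> r" "0 \<le> q"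
    using S_pos[of k] S_pos[of "Suc k"] e_nonneg[of "Suc k"] by (simp_all add: s_def r_def q_def)
  have s_sq: "s\<^sup>2 = r\<^sup>2 + q * s"
    using S_Suc[of k] S_pos[of k] S_pos[of "Suc k"] e_nonneg[of "Suc k"]
    by (simp add: s_def r_def q_def real_sqrt_mult)
  then have "q * s \<le> s * s"
    using pos by (simp add: power2_eq_square)
  then have "q \<le> s"
    using pos by simp
  have "(s - q / 2)\<^sup>2 = r\<^sup>2 + (q / 2)\<^sup>2"
    using s_sq by (simp add: power2_diff power2_eq_square field_simps)
  then have "r\<^sup>2 \<le> (s - q / 2)\<^sup>2"
    by simp
  moreover have "0 \<le> s - q / 2"
    using \<open>q \<le> s\<close> pos by simp
  ultimately have "r \<le> s - q / 2"
    by (rule power2_le_imp_le)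
  moreover have "(\<Sum>j\<le>Suc k. sqrt (e j)) = (\<Sum>j\<le>k. sqrt (e j)) + q"
    by (simp add: q_def)
  ultimately show ?case
    using Suc.IH by (simp add: s_def r_def)
qed

(* The hypotheses of the theorem with strict convexity of h weakened to convexity and G >= 1
   to G >= 0. *)
locale acc_bpp3 =
  fixes L :: "'a::euclidean_space set"
    and d h :: "'a \<Rightarrow> real" and gh :: "'a \<Rightarrow> 'a"
    and G :: real
    and lam v y :: "nat \<Rightarrow> 'a" and theta eta :: "nat \<Rightarrow> real"
  assumes d_concave: "concave_on L d"
    and h_convex: "convex_on L h"
    and h_grad: "\<And>x. x \<in> L \<Longrightarrow> (h has_derivative (\<lambda>u. gh x \<bullet> u)) (at x)"
    and TSP: "triangle_scaling h gh L G"
    and G_nonneg: "0 \<le> G"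
    and lam0: "lam 0 \<in> L"
    and v0: "v 0 = lam 0"
    and theta0: "theta 0 = 1"
    and eta_pos: "\<And>k. eta k > 0"
    and y_def: "\<And>k. y k = theta k *\<^sub>R v k + (1 - theta k) *\<^sub>R lam k"
    and lam_mem: "\<And>k. lam (Suc k) \<in> L"
    and lam_max: "\<And>k z. z \<in> L \<Longrightarrow>
        d z - bregman h gh z (y k) / eta k
          \<le> d (lam (Suc k)) - bregman h gh (lam (Suc k)) (y k) / eta k"
    and v_mem: "\<And>k. v (Suc k) \<in> L"
    and v_max: "\<And>k z. z \<in> L \<Longrightarrow>
        - G * bregman h gh z (lam 0)
          + (\<Sum>j\<le>k. eta j / theta j *
               (d (lam (Suc j)) + (1 / eta j) * ((gh (lam (Suc j)) - gh (y j)) \<bullet> (z - lam (Suc j)))))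
        \<le> - G * bregman h gh (v (Suc k)) (lam 0)
          + (\<Sum>j\<le>k. eta j / theta j *
               (d (lam (Suc j)) + (1 / eta j) * ((gh (lam (Suc j)) - gh (y j)) \<bullet> (v (Suc k) - lam (Suc j)))))"
    and theta_range: "\<And>k. 0 < theta (Suc k) \<and> theta (Suc k) \<le> 1"
    and theta_rec: "\<And>k. eta k / (theta k)\<^sup>2
        = eta (Suc k) / (theta (Suc k))\<^sup>2 - eta (Suc k) / theta (Suc k)"
begin

definition weight :: "nat \<Rightarrow> real" where
  "weight j = eta j / theta j"

definition model :: "nat \<Rightarrow> 'a \<Rightarrow> real" where
  "model j z = d (lam (Suc j)) + (1 / eta j) * ((gh (lam (Suc j)) - gh (y j)) \<bullet> (z - lam (Suc j)))"

definition estimate :: "nat \<Rightarrow> 'a \<Rightarrow> real" where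
  "estimate n z = (\<Sum>j<n. weight j * model j z) - G * bregman h gh z (lam 0)"

lemma L_convex: "convex L"
  using d_concave by (rule concave_on_imp_convex)

lemma theta_pos: "0 < theta k"
  and theta_le_1: "theta k \<le> 1"
  using theta0 theta_range by (cases k; simp)+

lemma lam_in: "lam k \<in> L"
  using lam0 lam_mem by (cases k) simp_all

lemma v_in: "v k \<in> L"
  using lam0 v0 v_mem by (cases k) simp_all

lemma y_eq: "y k = (1 - theta k) *\<^sub>R lam k + theta k *\<^sub>R v k"
  by (simp add: y_def add.commute)

lemma y_in: "y k \<in> L"
  unfolding y_eq using convexD_alt[OF L_convex lam_in v_in] theta_pos[of k] theta_le_1[of k] by simp

lemma weight_pos: "0 < weight j"
  using eta_pos theta_pos by (simp add: weight_def)

lemma weight_sum: "eta k / (theta k)\<^sup>2 = (\<Sum>j\<le>k. weight j)"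
proof (induction k)
  case 0
  show ?case
    by (simp add: theta0 weight_def)
next
  case (Suc k)
  then show ?case
    using theta_rec[of k] by (simp add: weight_def)
qed

lemma d_le_model:
  assumes "z \<in> L"
  shows "d z \<le> model j z"
proof -
  let ?l = "lam (Suc j)"
  have "d z - (1 / eta j) * bregman h gh z (y j)
      \<le> d ?l - (1 / eta j) * bregman h gh ?l (y j) - (1 / eta j) * bregman h gh z ?l"
    by (rule bregman_three_point_property[where gh=gh, OF L_convex d_concave lam_in assms h_grad[OF lam_in]])
      (use lam_max in simp)
  moreover have "bregman h gh z (y j) = bregman h gh z ?l + bregman h gh ?l (y j)
      + (gh ?l - gh (y j)) \<bullet> (z - ?l)"
    by (rule bregman_three_point)
  ultimately show ?thesis
    by (simp add: model_def algebra_simps)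
qed

lemma model_concave: "concave_on L (model j)"
proof -
  have "model j = (\<lambda>z. d (lam (Suc j)) + ((1 / eta j) *\<^sub>R (gh (lam (Suc j)) - gh (y j))) \<bullet> (z - lam (Suc j)))"
    by (simp add: fun_eq_iff model_def)
  then show ?thesis
    by (simp only: concave_on_affine[OF L_convex])
qed

lemma estimate_Suc_eq:
  "estimate (Suc k) z = - G * bregman h gh z (lam 0)
     + (\<Sum>j\<le>k. eta j / theta j *
          (d (lam (Suc j)) + (1 / eta j) * ((gh (lam (Suc j)) - gh (y j)) \<bullet> (z - lam (Suc j)))))"
  by (simp add: estimate_def weight_def model_def lessThan_Suc_atMost)

lemma estimate_three_point:
  assumes "z \<in> L"
  shows "estimate n z \<le> estimate n (v n) - G * bregman h gh z (v n)"
proof (cases n)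
  case 0
  then show ?thesis
    by (simp add: estimate_def v0)
next
  case (Suc k)
  have "concave_on L (\<lambda>z. \<Sum>j<n. weight j * model j z)"
    using weight_pos model_concave
    by (intro concave_on_sum_fun L_convex concave_on_cmul) (auto intro: less_imp_le)
  moreover have "estimate n u \<le> estimate n (v n)" if "u \<in> L" for u
    using v_max[OF that, of k] by (simp add: Suc estimate_Suc_eq)
  ultimately show ?thesis
    unfolding estimate_def
    by (rule bregman_three_point_property[where gh=gh, OF L_convex _ v_in assms h_grad[OF v_in]])
qed

lemma model_convex_combination:
  "(1 - t) * model j x + t * model j z = model j ((1 - t) *\<^sub>R x + t *\<^sub>R z)"
  by (simp add: model_def inner_add_right inner_diff_right inner_diff_left algebra_simps
      add_divide_distrib diff_divide_distrib)

lemma scaled_model_le: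
  fixes n :: nat
  defines "S \<equiv> eta n / (theta n)\<^sup>2"
  shows "S * model n ((1 - theta n) *\<^sub>R lam n + theta n *\<^sub>R v (Suc n))
    \<le> S * d (lam (Suc n)) + G * bregman h gh (v (Suc n)) (v n)"
proof -
  define w where "w = (1 - theta n) *\<^sub>R lam n + theta n *\<^sub>R v (Suc n)"
  let ?D = "bregman h gh (v (Suc n)) (v n)"
  have w_in: "w \<in> L"
    unfolding w_def using convexD_alt[OF L_convex lam_in v_in] theta_pos[of n] theta_le_1[of n] by simp
  have "(gh (lam (Suc n)) - gh (y n)) \<bullet> (w - lam (Suc n)) \<le> bregman h gh w (y n)"
    by (rule inner_gradient_diff_le_bregman[OF h_convex lam_in y_in w_in h_grad])
  also have "\<dots> \<le> G * (theta n)\<^sup>2 * ?D"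
    using TSP lam_in v_in theta_pos[of n] theta_le_1[of n]
    unfolding triangle_scaling_def w_def y_eq by simp
  finally have inner_le: "(gh (lam (Suc n)) - gh (y n)) \<bullet> (w - lam (Suc n)) \<le> G * (theta n)\<^sup>2 * ?D" .
  have "S * model n w
      = S * d (lam (Suc n)) + S / eta n * ((gh (lam (Suc n)) - gh (y n)) \<bullet> (w - lam (Suc n)))"
    by (simp add: model_def algebra_simps)
  also have "\<dots> \<le> S * d (lam (Suc n)) + S / eta n * (G * (theta n)\<^sup>2 * ?D)"
    using inner_le eta_pos[of n] by (intro add_left_mono mult_left_mono) (simp_all add: S_def)
  also have "\<dots> = S * d (lam (Suc n)) + G * ?D"
    using eta_pos[of n] theta_pos[of n] by (simp add: S_def field_simps)
  finally show ?thesis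
    unfolding w_def .
qed

lemma estimate_at_v_le: "estimate n (v n) \<le> (\<Sum>j<n. weight j) * d (lam n)"
proof (induction n)
  case 0
  show ?case
    by (simp add: estimate_def v0)
next
  case (Suc n)
  define S where "S = eta n / (theta n)\<^sup>2"
  let ?D = "bregman h gh (v (Suc n)) (v n)"
  have S_sum: "(\<Sum>j<Suc n. weight j) = S"
    using weight_sum[of n] by (simp add: S_def lessThan_Suc_atMost)
  have weight_n: "weight n = S * theta n"
    using theta_pos[of n] by (simp add: S_def weight_def power2_eq_square)
  have sum_before_n: "(\<Sum>j<n. weight j) = S * (1 - theta n)"
    using S_sum weight_n by (simp add: algebra_simps)
  have d_le: "(\<Sum>j<n. weight j) * d (lam n) \<le> (\<Sum>j<n. weight j) * model n (lam n)"
    using d_le_model[OF lam_in] weight_pos by (intro mult_left_mono sum_nonneg) (auto intro: less_imp_le)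
  have "estimate (Suc n) (v (Suc n)) = estimate n (v (Suc n)) + weight n * model n (v (Suc n))"
    by (simp add: estimate_def)
  also have "\<dots> \<le> estimate n (v n) - G * ?D + weight n * model n (v (Suc n))"
    using estimate_three_point[OF v_in] by simp
  also have "\<dots> \<le> (\<Sum>j<n. weight j) * model n (lam n) + weight n * model n (v (Suc n)) - G * ?D"
    using Suc.IH d_le by linarith
  also have "\<dots> = S * model n ((1 - theta n) *\<^sub>R lam n + theta n *\<^sub>R v (Suc n)) - G * ?D"
    by (simp add: sum_before_n weight_n flip: model_convex_combination) (simp add: algebra_simps)
  also have "\<dots> \<le> S * d (lam (Suc n))"
    using scaled_model_le[of n] by (simp add: S_def)
  finally show ?case
    unfolding S_sum .
qed

lemma scaled_gap_le:
  assumes "z \<in> L"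
  shows "eta k / (theta k)\<^sup>2 * (d z - d (lam (Suc k))) \<le> G * bregman h gh z (lam 0)"
proof -
  let ?S = "eta k / (theta k)\<^sup>2"
  have S_sum: "?S = (\<Sum>j<Suc k. weight j)"
    by (simp add: weight_sum lessThan_Suc_atMost)
  have "?S * d z = (\<Sum>j<Suc k. weight j * d z)"
    by (simp only: S_sum sum_distrib_right)
  also have "\<dots> \<le> (\<Sum>j<Suc k. weight j * model j z)"
    using d_le_model[OF assms] weight_pos by (intro sum_mono mult_left_mono) (auto intro: less_imp_le)
  finally have "?S * d z - G * bregman h gh z (lam 0) \<le> estimate (Suc k) z"
    by (simp add: estimate_def)
  also have "\<dots> \<le> estimate (Suc k) (v (Suc k))"
    using estimate_three_point[OF assms] bregman_nonneg[where gh=gh, OF h_convex v_in assms h_grad[OF v_in]] G_nonneg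
    by (smt (verit) mult_nonneg_nonneg)
  also have "\<dots> \<le> ?S * d (lam (Suc k))"
    unfolding S_sum by (rule estimate_at_v_le)
  finally show ?thesis
    by (simp only: right_diff_distrib)
qed

lemma sum_sqrt_eta_le: "(\<Sum>j\<le>k. sqrt (eta j)) \<le> 2 * sqrt (eta k / (theta k)\<^sup>2)"
proof (rule sum_sqrt_le_twice_sqrt)
  fix i
  have "eta (Suc i) * (eta (Suc i) / (theta (Suc i))\<^sup>2) = (eta (Suc i) / theta (Suc i))\<^sup>2"
    by (simp add: power_divide power2_eq_square)
  then have "sqrt (eta (Suc i) * (eta (Suc i) / (theta (Suc i))\<^sup>2)) = eta (Suc i) / theta (Suc i)"
    using eta_pos[of "Suc i"] theta_pos[of "Suc i"] by simp
  then show "eta (Suc i) / (theta (Suc i))\<^sup>2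
      = eta i / (theta i)\<^sup>2 + sqrt (eta (Suc i) * (eta (Suc i) / (theta (Suc i))\<^sup>2))"
    using theta_rec[of i] by simp
next
  show "eta 0 / (theta 0)\<^sup>2 = eta 0"
    by (simp add: theta0)
  show "0 < eta i / (theta i)\<^sup>2" for i
    using eta_pos[of i] theta_pos[of i] by simp
  show "0 \<le> eta i" for i
    using eta_pos[of i] by simp
qed

lemma convergence_rate:
  assumes "1 \<le> T" "z \<in> L"
  shows "d z - d (lam T) \<le> 4 * G * bregman h gh z (lam 0) / (\<Sum>k<T. sqrt (eta k))\<^sup>2"
proof -
  obtain k where T: "T = Suc k"
    using assms(1) by (cases T) auto
  define S where "S = eta k / (theta k)\<^sup>2"
  define B where "B = G * bregman h gh z (lam 0)"
  have S_pos: "0 < S"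
    using eta_pos[of k] theta_pos[of k] by (simp add: S_def)
  have B_nonneg: "0 \<le> B"
    using G_nonneg bregman_nonneg[where gh=gh, OF h_convex lam0 assms(2) h_grad[OF lam0]] by (simp add: B_def)
  have sum_pos: "0 < (\<Sum>j<T. sqrt (eta j))"
    using eta_pos T by (intro sum_pos) auto
  have "(\<Sum>j<T. sqrt (eta j))\<^sup>2 \<le> (2 * sqrt S)\<^sup>2"
    using sum_sqrt_eta_le[of k] sum_pos by (intro power_mono) (simp_all add: T S_def lessThan_Suc_atMost)
  also have "\<dots> = 4 * S"
    using S_pos by (simp add: power_mult_distrib)
  finally have sum_sq_le: "(\<Sum>j<T. sqrt (eta j))\<^sup>2 \<le> 4 * S" .
  have "S * (d z - d (lam T)) \<le> B"
    using scaled_gap_le[OF assms(2), of k] by (simp add: T S_def B_def)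
  then have "d z - d (lam T) \<le> B / S"
    using S_pos by (simp add: pos_le_divide_eq mult.commute)
  also have "\<dots> = 4 * B / (4 * S)"
    by simp
  also have "\<dots> \<le> 4 * B / (\<Sum>j<T. sqrt (eta j))\<^sup>2"
    using B_nonneg sum_sq_le sum_pos S_pos by (intro divide_left_mono) simp_all
  finally show ?thesis
    by (simp add: B_def)
qed

end


theorem mainTheorem10:
  fixes L :: "'a::euclidean_space set"
    and d h :: "'a \<Rightarrow> real" and gh :: "'a \<Rightarrow> 'a"
    and G :: real
    and lam v y :: "nat \<Rightarrow> 'a" and theta eta :: "nat \<Rightarrow> real"
    and T :: nat and \<mu> :: 'a
  assumes L_closed: "closed L" and L_convex: "convex L"
    and d_concave: "concave_on L d"
    and h_strict: "strictly_convex_on L h"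
    and h_grad: "\<And>x. x \<in> L \<Longrightarrow> (h has_derivative (\<lambda>u. gh x \<bullet> u)) (at x)"
    and gh_cont: "continuous_on L gh"
    and TSP: "triangle_scaling h gh L G"
    and G_ge: "G \<ge> 1"
    and lam0: "lam 0 \<in> L"
    and v0: "v 0 = lam 0"
    and theta0: "theta 0 = 1"
    and eta_pos: "\<And>k. eta k > 0"
    and y_def: "\<And>k. y k = theta k *\<^sub>R v k + (1 - theta k) *\<^sub>R lam k"
    and lam_mem: "\<And>k. lam (Suc k) \<in> L"
    and lam_max: "\<And>k z. z \<in> L \<Longrightarrow>
        d z - bregman h gh z (y k) / eta k
          \<le> d (lam (Suc k)) - bregman h gh (lam (Suc k)) (y k) / eta k"
    and v_mem: "\<And>k. v (Suc k) \<in> L"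
    and v_max: "\<And>k z. z \<in> L \<Longrightarrow>
        - G * bregman h gh z (lam 0)
          + (\<Sum>j\<le>k. eta j / theta j *
               (d (lam (Suc j)) + (1 / eta j) * ((gh (lam (Suc j)) - gh (y j)) \<bullet> (z - lam (Suc j)))))
        \<le> - G * bregman h gh (v (Suc k)) (lam 0)
          + (\<Sum>j\<le>k. eta j / theta j *
               (d (lam (Suc j)) + (1 / eta j) * ((gh (lam (Suc j)) - gh (y j)) \<bullet> (v (Suc k) - lam (Suc j)))))"
    and theta_range: "\<And>k. 0 < theta (Suc k) \<and> theta (Suc k) \<le> 1"
    and theta_rec: "\<And>k. eta k / (theta k)\<^sup>2
        = eta (Suc k) / (theta (Suc k))\<^sup>2 - eta (Suc k) / theta (Suc k)"
    and T_ge: "T \<ge> 1"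
    and mu_mem: "\<mu> \<in> L"
  shows "d \<mu> - d (lam T)
      \<le> 4 * G * bregman h gh \<mu> (lam 0) / (\<Sum>k<T. sqrt (eta k))\<^sup>2"
proof -
  interpret acc_bpp3 L d h gh G lam v y theta eta
  proof
    show "convex_on L h"
      using h_strict by (rule strictly_convex_on_imp_convex_on)
    show "0 \<le> G"
      using G_ge by simp
  qed (fact assms)+
  show ?thesis
    using convergence_rate[OF T_ge mu_mem] .
qed

end
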